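(* Let $\epsilon\in[0,1]$. If $\epsilon\ge 1-1/\sqrt2$, then the noisy projected number POVM $\mathsf N^{\rm prono}$ and the noisy projected canonical phase POVM $\Phi$, both with noise parameter $\epsilon$, are jointly measurable.
   Context: All operators act on $\mathbb C^2$. $\mathsf N^{\rm prono}_0=\begin{pmatrix}1-\epsilon/2&0\\0&\epsilon/2\end{pmatrix}$, $\mathsf N^{\rm prono}_1=\begin{pmatrix}\epsilon/2&0\\0&1-\epsilon/2\end{pmatrix}$. For Borel $X\subseteq[0,2\pi)$, $\Phi(X)=\int_X\begin{pmatrix}1&(1-\epsilon)e^{-i\theta}\\(1-\epsilon)e^{i\theta}&1\end{pmatrix}\frac{d\theta}{2\pi}$. Joint measurability means existence of a POVM $\mathsf M$ on $\{0,1\}\times[0,2\pi)$ with $\mathsf M(\{n\}\times[0,2\pi))=\mathsf N^{\rm prono}_n$ for $n=0,1$ and $\mathsf M(\{0,1\}\times X)=\Phi(X)$ for all Borel $X$. *)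

theory Defs
  imports "HOL-Analysis.Analysis"
begin

definition mat2 :: "complex \<Rightarrow> complex \<Rightarrow> complex \<Rightarrow> complex \<Rightarrow> complex^2^2" where
  "mat2 a b c d = (\<chi> i j. if i = 1 then (if j = 1 then a else b) else (if j = 1 then c else d))"

definition psd2 :: "complex^2^2 \<Rightarrow> bool" where
  "psd2 A \<longleftrightarrow> (\<forall>v::complex^2. \<exists>r::real. r \<ge> 0 \<and>
      (\<Sum>i\<in>UNIV. cnj (v $ i) * (A *v v) $ i) = complex_of_real r)"

definition is_povm :: "'a measure \<Rightarrow> ('a set \<Rightarrow> complex^2^2) \<Rightarrow> bool" where
  "is_povm \<Omega> M \<longleftrightarrow>
     (\<forall>A\<in>sets \<Omega>. psd2 (M A)) \<and> M (space \<Omega>) = mat 1 \<and>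
     (\<forall>A::nat \<Rightarrow> 'a set. range A \<subseteq> sets \<Omega> \<longrightarrow> disjoint_family A \<longrightarrow>
        (\<lambda>n. M (A n)) sums M (\<Union>n. A n))"

definition N_prono :: "real \<Rightarrow> nat \<Rightarrow> complex^2^2" where
  "N_prono \<epsilon> n = (if n = 0 then mat2 (1 - \<epsilon>/2) 0 0 (\<epsilon>/2) else mat2 (\<epsilon>/2) 0 0 (1 - \<epsilon>/2))"

definition Phi_phase :: "real \<Rightarrow> real set \<Rightarrow> complex^2^2" where
  "Phi_phase \<epsilon> X = set_lebesgue_integral lborel X
     (\<lambda>\<theta>. (1 / (2 * pi)) *\<^sub>R mat2 1 (complex_of_real (1 - \<epsilon>) * cis (- \<theta>))
                                   (complex_of_real (1 - \<epsilon>) * cis \<theta>) 1)"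

definition joint_space :: "(nat \<times> real) measure" where
  "joint_space = count_space {0, 1} \<Otimes>\<^sub>M restrict_space borel {0..<2*pi}"

definition jointly_measurable :: "real \<Rightarrow> bool" where
  "jointly_measurable \<epsilon> \<longleftrightarrow> (\<exists>M. is_povm joint_space M \<and>
     (\<forall>n\<in>{0::nat, 1}. M ({n} \<times> {0..<2*pi}) = N_prono \<epsilon> n) \<and>
     (\<forall>X. X \<in> sets borel \<and> X \<subseteq> {0..<2*pi} \<longrightarrow> M ({0, 1} \<times> X) = Phi_phase \<epsilon> X))"

end

theory Submission
  imports Defs
begin

text \<open>The joint POVM has the density \<open>M({n} \<times> d\<theta>) = G\<^sub>n(\<theta>) d\<theta>/2\<pi>\<close>, where
  \<open>G\<^sub>n(\<theta>)\<close> carries the diagonal of \<open>N\<^sub>n\<close> and half of the off-diagonal entries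
  \<open>(1-\<epsilon>) exp(\<mp>i\<theta>)\<close> of the phase density. Summing over \<open>n\<close> gives \<open>\<Phi>\<close>, and integrating
  over a period kills the off-diagonal terms and leaves \<open>N\<^sub>n\<close>. The Hermitian matrix
  \<open>G\<^sub>n(\<theta>)\<close> is positive semidefinite as soon as \<open>((1-\<epsilon>)/2)\<^sup>2 \<le> (1-\<epsilon>/2)(\<epsilon>/2)\<close>, i.e.
  \<open>2(1-\<epsilon>)\<^sup>2 \<le> 1\<close>, which is the hypothesis \<open>\<epsilon> \<ge> 1 - 1/\<surd>2\<close>; positivity survives
  integration, and countable additivity is that of the Lebesgue integral.\<close>

definition quad_form2 :: "complex^2 \<Rightarrow> complex^2^2 \<Rightarrow> complex" where
  "quad_form2 v A = (\<Sum>i\<in>UNIV. cnj (v $ i) * (A *v v) $ i)"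

lemma psd2_iff_quad_form2: "psd2 A \<longleftrightarrow> (\<forall>v. \<exists>r\<ge>0. quad_form2 v A = complex_of_real r)"
  unfolding psd2_def quad_form2_def by blast

lemma quad_form2_add: "quad_form2 v (A + B) = quad_form2 v A + quad_form2 v B"
  by (simp add: quad_form2_def matrix_vector_mult_def sum_2 algebra_simps)

lemma quad_form2_scaleR: "quad_form2 v (r *\<^sub>R A) = r *\<^sub>R quad_form2 v A"
  by (simp add: quad_form2_def matrix_vector_mult_def sum_2 vector_scaleR_component)
    (simp add: scaleR_conv_of_real algebra_simps)

lemma bounded_linear_quad_form2: "bounded_linear (quad_form2 v)"
  by (simp add: linear_conv_bounded_linear[symmetric] linearI quad_form2_add quad_form2_scaleR)

lemma quad_form2_mat2:
  "quad_form2 v (mat2 (of_real a) w (cnj w) (of_real b)) =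
     of_real (a * (cmod (v$1))\<^sup>2 + b * (cmod (v$2))\<^sup>2 + 2 * Re (cnj (v$1) * w * v$2))"
  by (simp add: quad_form2_def matrix_vector_mult_def sum_2 mat2_def complex_eq_iff cmod_power2)
    (simp add: algebra_simps power2_eq_square)

lemma cross_term_le:
  fixes a b k x y :: real
  assumes "0 \<le> a" "0 \<le> b" "k\<^sup>2 \<le> a * b"
  shows "2 * k * x * y \<le> a * x\<^sup>2 + b * y\<^sup>2"
proof (cases "a = 0")
  case True
  with assms show ?thesis by simp
next
  case False
  have "a * (a * x\<^sup>2 + b * y\<^sup>2 - 2 * k * x * y) = (a * x - k * y)\<^sup>2 + (a * b - k\<^sup>2) * y\<^sup>2"
    by (simp add: algebra_simps power2_eq_square)
  also have "\<dots> \<ge> 0" using assms by simp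
  finally show ?thesis using False assms(1) by (simp add: zero_le_mult_iff)
qed

lemma psd2_mat2:
  assumes "0 \<le> a" "0 \<le> b" "(cmod w)\<^sup>2 \<le> a * b"
  shows "psd2 (mat2 (of_real a) w (cnj w) (of_real b))"
  unfolding psd2_iff_quad_form2 quad_form2_mat2
proof (intro allI)
  fix v :: "complex^2"
  have "- (cmod (v$1) * cmod w * cmod (v$2)) \<le> Re (cnj (v$1) * w * v$2)"
    using abs_Re_le_cmod[of "cnj (v$1) * w * v$2"] by (simp add: norm_mult)
  moreover have "2 * cmod w * cmod (v$1) * cmod (v$2) \<le> a * (cmod (v$1))\<^sup>2 + b * (cmod (v$2))\<^sup>2"
    using assms by (intro cross_term_le) auto
  ultimately have "0 \<le> a * (cmod (v$1))\<^sup>2 + b * (cmod (v$2))\<^sup>2 + 2 * Re (cnj (v$1) * w * v$2)"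
    by (simp add: algebra_simps)
  then show "\<exists>r\<ge>0. complex_of_real (a * (cmod (v$1))\<^sup>2 + b * (cmod (v$2))\<^sup>2 + 2 * Re (cnj (v$1) * w * v$2))
    = complex_of_real r" by blast
qed

lemma psd2_scaleR: "0 \<le> r \<Longrightarrow> psd2 A \<Longrightarrow> psd2 (r *\<^sub>R A)"
  unfolding psd2_iff_quad_form2 quad_form2_scaleR
  by (metis mult_nonneg_nonneg of_real_mult scaleR_conv_of_real)

lemma psd2_zero: "psd2 0"
  unfolding psd2_iff_quad_form2 by (auto simp: quad_form2_def)

lemma psd2_add: "psd2 A \<Longrightarrow> psd2 B \<Longrightarrow> psd2 (A + B)"
  unfolding psd2_iff_quad_form2 quad_form2_add by (metis add_nonneg_nonneg of_real_add)

lemma psd2_sum: "(\<And>i. i \<in> I \<Longrightarrow> psd2 (A i)) \<Longrightarrow> psd2 (\<Sum>i\<in>I. A i)"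
  by (induction I rule: infinite_finite_induct) (auto intro: psd2_zero psd2_add)

lemma psd2_set_integral:
  assumes "set_integrable M T f" and psd: "\<And>x. x \<in> T \<Longrightarrow> psd2 (f x)"
  shows "psd2 (LINT x:T|M. f x)"
  unfolding psd2_iff_quad_form2
proof
  fix v
  let ?q = "\<lambda>x. Re (quad_form2 v (f x))"
  have q: "quad_form2 v (f x) = of_real (?q x) \<and> 0 \<le> ?q x" if "x \<in> T" for x
    using psd[OF that] unfolding psd2_iff_quad_form2 by (metis Re_complex_of_real)
  have "quad_form2 v (LINT x:T|M. f x) = (LINT x:T|M. quad_form2 v (f x))"
    using assms(1) unfolding set_lebesgue_integral_def set_integrable_def
    by (simp add: integral_bounded_linear[OF bounded_linear_quad_form2, symmetric] quad_form2_scaleR)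
  also have "\<dots> = (LINT x:T|M. complex_of_real (?q x))"
    unfolding set_lebesgue_integral_def using q
    by (intro Bochner_Integration.integral_cong) (auto split: split_indicator)
  also have "\<dots> = of_real (LINT x:T|M. ?q x)"
    by (rule set_integral_complex_of_real)
  finally show "\<exists>r\<ge>0. quad_form2 v (LINT x:T|M. f x) = of_real r"
    using q unfolding set_lebesgue_integral_def
    by (intro exI[of _ "LINT x|M. indicator T x *\<^sub>R ?q x"])
      (auto intro!: integral_nonneg_AE AE_I2 split: split_indicator)
qed

lemma set_integral_sums:
  fixes f :: "_ \<Rightarrow> 'a::{banach, second_countable_topology}"
  assumes sets: "\<And>i. A i \<in> sets M" and disj: "disjoint_family A"
    and int: "set_integrable M (\<Union>i. A i) f"
  shows "(\<lambda>i. LINT x:A i|M. f x) sums (LINT x:(\<Union>i. A i)|M. f x)"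
proof -
  let ?B = "\<lambda>n. \<Union>i<n. A i"
  have int_A: "set_integrable M (A i) f" for i
    by (rule set_integrable_subset[OF int]) (auto intro: sets)
  have union: "(\<Union>n. ?B n) = (\<Union>i. A i)"
    by (auto intro: lessI)
  have "(\<lambda>n. LINT x:?B n|M. f x) \<longlonglongrightarrow> (LINT x:(\<Union>n. ?B n)|M. f x)"
  proof (rule set_integral_cont_up)
    show "incseq ?B"
      by (intro monoI UN_mono) auto
  qed (use sets int union in auto)
  moreover have "(LINT x:?B n|M. f x) = (\<Sum>i<n. LINT x:A i|M. f x)" for n
    using disj int_A sets
    by (intro set_integral_finite_Union) (auto simp: disjoint_family_on_def)
  ultimately show ?thesis
    unfolding sums_def union by simp
qed

lemma set_integral_trig_period:
  fixes C P Q :: "'a::euclidean_space"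
  shows "(LINT x:{0..<2*pi}|lborel. C + cos x *\<^sub>R P + sin x *\<^sub>R Q) = (2*pi) *\<^sub>R C"
proof -
  let ?f = "\<lambda>x. C + cos x *\<^sub>R P + sin x *\<^sub>R Q"
  have "(LINT x:{0..<2*pi}|lborel. ?f x) = (LINT x:{0..2*pi}|lborel. ?f x)"
    by (rule set_integral_cong_set)
      (auto intro!: eventually_mono[OF AE_lborel_singleton[of "2*pi"]] simp: set_borel_measurable_def)
  also have "\<dots> = (2*pi) *\<^sub>R C + sin (2*pi) *\<^sub>R P - cos (2*pi) *\<^sub>R Q - (0 *\<^sub>R C + sin 0 *\<^sub>R P - cos 0 *\<^sub>R Q)"
    unfolding set_lebesgue_integral_def
    by (rule integral_FTC_atLeastAtMost)
      (auto intro!: derivative_eq_intros continuous_intros simp: algebra_simps)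
  finally show ?thesis by simp
qed

lemma set_integrable_continuous_subset:
  fixes f :: "real \<Rightarrow> 'a::{banach, second_countable_topology}"
  assumes "continuous_on {a..b} f" "S \<in> sets borel" "S \<subseteq> {a..b}"
  shows "set_integrable lborel S f"
  using borel_integrable_atLeastAtMost'[OF assms(1)] by (rule set_integrable_subset) (use assms in auto)

definition prono_weight :: "real \<Rightarrow> nat \<Rightarrow> real" where
  "prono_weight \<epsilon> n = (if n = 0 then 1 - \<epsilon>/2 else \<epsilon>/2)"

lemma N_prono_eq_mat2:
  "N_prono \<epsilon> n = mat2 (of_real (prono_weight \<epsilon> n)) 0 0 (of_real (1 - prono_weight \<epsilon> n))"
  by (simp add: N_prono_def prono_weight_def)

lemma half_coherence_sq_le_prono_weights:
  assumes "\<epsilon> \<le> 1" "1 - 1 / sqrt 2 \<le> \<epsilon>"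
  shows "((1 - \<epsilon>) / 2)\<^sup>2 \<le> prono_weight \<epsilon> n * (1 - prono_weight \<epsilon> n)"
proof -
  have "(1 - \<epsilon>)\<^sup>2 \<le> (1 / sqrt 2)\<^sup>2"
    using assms by (intro power_mono) auto
  then have "2 * (1 - \<epsilon>)\<^sup>2 \<le> 1"
    by (simp add: power_divide)
  then show ?thesis
    by (simp add: prono_weight_def power2_eq_square field_simps)
qed

definition phase_density :: "real \<Rightarrow> nat \<Rightarrow> real \<Rightarrow> complex^2^2" where
  "phase_density \<epsilon> n \<theta> = (1 / (2*pi)) *\<^sub>R
     mat2 (of_real (prono_weight \<epsilon> n)) (of_real ((1 - \<epsilon>) / 2) * cis (- \<theta>))
          (of_real ((1 - \<epsilon>) / 2) * cis \<theta>) (of_real (1 - prono_weight \<epsilon> n))"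

lemma phase_density_trig:
  "phase_density \<epsilon> n \<theta> = (1 / (2*pi)) *\<^sub>R
     (N_prono \<epsilon> n
      + cos \<theta> *\<^sub>R mat2 0 (of_real ((1 - \<epsilon>) / 2)) (of_real ((1 - \<epsilon>) / 2)) 0
      + sin \<theta> *\<^sub>R mat2 0 (- \<i> * of_real ((1 - \<epsilon>) / 2)) (\<i> * of_real ((1 - \<epsilon>) / 2)) 0)"
  unfolding phase_density_def N_prono_eq_mat2
  by (simp add: vec_eq_iff forall_2 mat2_def complex_eq_iff cis.sel)

lemma set_integral_phase_density_period:
  "(LINT \<theta>:{0..<2*pi}|lborel. phase_density \<epsilon> n \<theta>) = N_prono \<epsilon> n"
  unfolding phase_density_trig by (simp add: set_integral_trig_period)

lemma set_integrable_phase_density: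
  "S \<in> sets borel \<Longrightarrow> S \<subseteq> {0..<2*pi} \<Longrightarrow> set_integrable lborel S (phase_density \<epsilon> n)"
  by (rule set_integrable_continuous_subset[of 0 "2*pi"])
    (auto simp: phase_density_trig[abs_def] intro!: continuous_intros)

lemma phase_density_sum:
  "phase_density \<epsilon> 0 \<theta> + phase_density \<epsilon> 1 \<theta> = (1 / (2 * pi)) *\<^sub>R
     mat2 1 (complex_of_real (1 - \<epsilon>) * cis (- \<theta>)) (complex_of_real (1 - \<epsilon>) * cis \<theta>) 1"
  unfolding phase_density_def prono_weight_def
  by (simp add: vec_eq_iff forall_2 mat2_def algebra_simps scaleR_conv_of_real)

lemma psd2_phase_density:
  assumes "0 \<le> \<epsilon>" "\<epsilon> \<le> 1" "1 - 1 / sqrt 2 \<le> \<epsilon>"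
  shows "psd2 (phase_density \<epsilon> n \<theta>)"
proof -
  let ?w = "of_real ((1 - \<epsilon>) / 2) * cis (- \<theta>)"
  have "cmod ?w = (1 - \<epsilon>) / 2"
    using assms(2) by (simp only: norm_mult norm_cis norm_of_real) simp
  then have "psd2 (mat2 (of_real (prono_weight \<epsilon> n)) ?w (cnj ?w) (of_real (1 - prono_weight \<epsilon> n)))"
    using half_coherence_sq_le_prono_weights[OF assms(2,3)] assms(1,2)
    by (intro psd2_mat2) (auto simp: prono_weight_def)
  then show ?thesis
    unfolding phase_density_def by (intro psd2_scaleR) (simp_all add: cis_cnj)
qed

definition phase_section :: "nat \<Rightarrow> (nat \<times> real) set \<Rightarrow> real set" where
  "phase_section n A = Pair n -` A \<inter> {0..<2*pi}"

lemma phase_section_sets: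
  assumes "A \<in> sets joint_space"
  shows "phase_section n A \<in> sets borel"
proof -
  have "Pair n -` A \<in> sets (restrict_space borel {0..<2*pi})"
    using assms unfolding joint_space_def by (rule sets_Pair1)
  then show ?thesis
    unfolding phase_section_def by (subst (asm) sets_restrict_space_iff) auto
qed

definition prono_phase_povm :: "real \<Rightarrow> (nat \<times> real) set \<Rightarrow> complex^2^2" where
  "prono_phase_povm \<epsilon> A = (\<Sum>n\<in>{0,1}. LINT \<theta>:phase_section n A|lborel. phase_density \<epsilon> n \<theta>)"

lemma is_povm_prono_phase_povm:
  assumes "0 \<le> \<epsilon>" "\<epsilon> \<le> 1" "1 - 1 / sqrt 2 \<le> \<epsilon>"
  shows "is_povm joint_space (prono_phase_povm \<epsilon>)"
  unfolding is_povm_def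
proof (intro conjI ballI allI impI)
  fix A assume "A \<in> sets joint_space"
  then show "psd2 (prono_phase_povm \<epsilon> A)"
    unfolding prono_phase_povm_def
    by (intro psd2_sum psd2_set_integral set_integrable_phase_density psd2_phase_density
        phase_section_sets assms) (auto simp: phase_section_def)
next
  have "phase_section n (space joint_space) = {0..<2*pi}" if "n \<in> {0,1}" for n
    using that by (auto simp: phase_section_def joint_space_def space_pair_measure)
  then show "prono_phase_povm \<epsilon> (space joint_space) = mat 1"
    by (simp add: prono_phase_povm_def set_integral_phase_density_period N_prono_def
        vec_eq_iff forall_2 mat2_def mat_def)
next
  fix A :: "nat \<Rightarrow> (nat \<times> real) set"
  assume sets: "range A \<subseteq> sets joint_space" and disj: "disjoint_family A"
  have "(\<lambda>i. LINT \<theta>:phase_section n (A i)|lborel. phase_density \<epsilon> n \<theta>) sums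
        (LINT \<theta>:phase_section n (\<Union>i. A i)|lborel. phase_density \<epsilon> n \<theta>)" for n
  proof -
    have sections: "phase_section n (\<Union>i. A i) = (\<Union>i. phase_section n (A i))"
      by (auto simp: phase_section_def)
    have "phase_section n (A i) \<in> sets borel" for i
      using sets by (auto intro: phase_section_sets)
    moreover from this have "(\<Union>i. phase_section n (A i)) \<in> sets borel"
      by (intro sets.countable_UN) auto
    ultimately show ?thesis
      unfolding sections
      by (intro set_integral_sums set_integrable_phase_density)
        (use disj in \<open>auto simp: disjoint_family_on_def phase_section_def\<close>)
  qed
  then show "(\<lambda>i. prono_phase_povm \<epsilon> (A i)) sums prono_phase_povm \<epsilon> (\<Union>i. A i)"
    unfolding prono_phase_povm_def by (intro sums_sum)
qed

lemma prono_phase_povm_number_marginal: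
  assumes "n \<in> {0,1}"
  shows "prono_phase_povm \<epsilon> ({n} \<times> {0..<2*pi}) = N_prono \<epsilon> n"
proof -
  have "phase_section m ({n} \<times> {0..<2*pi}) = (if m = n then {0..<2*pi} else {})" for m
    by (auto simp: phase_section_def)
  moreover have "(LINT \<theta>:{}|lborel. phase_density \<epsilon> m \<theta>) = 0" for m
    by (simp add: set_lebesgue_integral_def)
  ultimately show ?thesis
    using assms by (auto simp: prono_phase_povm_def set_integral_phase_density_period)
qed

lemma prono_phase_povm_phase_marginal:
  assumes "X \<in> sets borel" "X \<subseteq> {0..<2*pi}"
  shows "prono_phase_povm \<epsilon> ({0,1} \<times> X) = Phi_phase \<epsilon> X"
proof -
  have "phase_section n ({0,1} \<times> X) = X" if "n \<in> {0,1}" for n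
    using assms(2) that by (auto simp: phase_section_def)
  then have "prono_phase_povm \<epsilon> ({0,1} \<times> X) =
      (LINT \<theta>:X|lborel. phase_density \<epsilon> 0 \<theta>) + (LINT \<theta>:X|lborel. phase_density \<epsilon> 1 \<theta>)"
    by (simp add: prono_phase_povm_def)
  also have "\<dots> = (LINT \<theta>:X|lborel. phase_density \<epsilon> 0 \<theta> + phase_density \<epsilon> 1 \<theta>)"
    using assms by (simp add: set_integral_add set_integrable_phase_density)
  finally show ?thesis
    unfolding phase_density_sum Phi_phase_def .
qed

theorem mainTheorem9:
  fixes \<epsilon> :: real
  assumes "0 \<le> \<epsilon>" and "\<epsilon> \<le> 1" and "\<epsilon> \<ge> 1 - 1 / sqrt 2"
  shows "jointly_measurable \<epsilon>"
  unfolding jointly_measurable_def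
  using is_povm_prono_phase_povm[OF assms] prono_phase_povm_number_marginal
    prono_phase_povm_phase_marginal
  by blast

end
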